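(* Let $\Gamma=(-a_1,\dots,-a_k)$ be a linear chain with integers $a_i\ge 2$. Then $\Gamma\in\mathcal G_r$ if and only if there are relatively prime integers $p>q>0$ with $a_1-\cfrac{1}{a_2-\cfrac{1}{\ddots-\cfrac{1}{a_k}}}=\dfrac{p^2}{pq-1}$.
   Context: $\mathcal G_r$ is the smallest set of linear chains (written as the sequence of vertex decorations along the chain) which contains the one-vertex chain $(-4)$ and which, whenever it contains $(-a_1,\dots,-a_k)$, also contains $(-2,-a_1,\dots,-a_{k-1},-a_k-1)$ and $(-a_1-1,-a_2,\dots,-a_k,-2)$. *)

theory Defs
  imports Complex_Main
begin

text \<open>A linear chain is represented by the list of its vertex decorations
  (integers), read along the chain. The set G_r of the paper:\<close>

inductive_set Gr :: "int list set" where
  base: "[-4] \<in> Gr"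
| left: "ds \<in> Gr \<Longrightarrow> ds \<noteq> [] \<Longrightarrow> (-2) # butlast ds @ [last ds - 1] \<in> Gr"
| right: "ds \<in> Gr \<Longrightarrow> ds \<noteq> [] \<Longrightarrow> (hd ds - 1) # tl ds @ [-2] \<in> Gr"

fun hj_cf :: "int list \<Rightarrow> real" where
  "hj_cf [] = 0"
| "hj_cf [a] = of_int a"
| "hj_cf (a # b # rest) = of_int a - 1 / hj_cf (b # rest)"

end

theory Submission
  imports Defs
begin

text \<open>Multiply the matrices \<open>M(a) = ((a, -1), (1, 0))\<close> along the chain \<open>-a\<^sub>1, ..., -a\<^sub>k\<close>.
  For \<open>a\<^sub>i \<ge> 2\<close> the first column of \<open>M(a\<^sub>1)\<cdots>M(a\<^sub>k)\<close> is numerator and denominator of the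
  continued fraction, and the value of the continued fraction determines the chain, since
  \<open>a\<^sub>1\<close> is its ceiling. Each of the two operations generating \<open>G\<^sub>r\<close> multiplies the product by
  fixed matrices on both sides. On the family \<open>F(p, q)\<close> with first column \<open>(p\<^sup>2, pq - 1)\<close> they act
  as \<open>(p, q) \<mapsto> (2p - q, p)\<close> and \<open>(p, q) \<mapsto> (p + q, q)\<close>, and \<open>F(2, 1) = M(4)\<close>. These moves
  preserve coprimality, and conversely every coprime pair \<open>p > q > 0\<close> descends to \<open>(2, 1)\<close>
  by inverting them, as in the Euclidean algorithm.\<close>

datatype mat2 = Mat2 (m11: int) (m12: int) (m21: int) (m22: int)

instantiation mat2 :: monoid_mult
begin

definition one_mat2 :: mat2 where
  "1 = Mat2 1 0 0 1"

fun times_mat2 :: "mat2 \<Rightarrow> mat2 \<Rightarrow> mat2" where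
  "Mat2 a b c d * Mat2 a' b' c' d' =
     Mat2 (a * a' + b * c') (a * b' + b * d') (c * a' + d * c') (c * b' + d * d')"

instance
proof
  fix A B C :: mat2
  show "A * B * C = A * (B * C)"
    by (cases A; cases B; cases C) (simp add: algebra_simps)
  show "1 * A = A" "A * 1 = A"
    by (cases A; simp add: one_mat2_def)+
qed

end

definition hj_mat :: "int \<Rightarrow> mat2" where
  "hj_mat a = Mat2 a (-1) 1 0"

definition hj_prod :: "int list \<Rightarrow> mat2" where
  "hj_prod xs = (\<Prod>x\<leftarrow>xs. hj_mat x)"

definition gr_mat :: "int \<Rightarrow> int \<Rightarrow> mat2" where
  "gr_mat p q = Mat2 (p\<^sup>2) (1 - p * (p - q)) (p * q - 1) (1 - q * (p - q))"

lemma hj_prod_Cons: "hj_prod (a # xs) = hj_mat a * hj_prod xs"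
  by (simp add: hj_prod_def)

lemma hj_prod_Gr_left:
  assumes "ds \<noteq> []"
  shows "hj_prod (map uminus ((-2) # butlast ds @ [last ds - 1])) =
    hj_mat 2 * hj_prod (map uminus ds) * Mat2 1 0 (-1) 1"
proof -
  obtain ys y where "ds = ys @ [y]"
    using assms rev_exhaust by blast
  moreover have "hj_mat (1 - y) = hj_mat (- y) * Mat2 1 0 (-1) 1"
    by (simp add: hj_mat_def)
  ultimately show ?thesis
    by (simp add: hj_prod_def mult.assoc)
qed

lemma hj_prod_Gr_right:
  assumes "ds \<noteq> []"
  shows "hj_prod (map uminus ((hd ds - 1) # tl ds @ [-2])) =
    Mat2 1 1 0 1 * hj_prod (map uminus ds) * hj_mat 2"
proof -
  obtain y ys where "ds = y # ys"
    using assms list.exhaust by blast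
  moreover have "hj_mat (1 - y) = Mat2 1 1 0 1 * hj_mat (- y)"
    by (simp add: hj_mat_def)
  ultimately show ?thesis
    by (simp add: hj_prod_def mult.assoc)
qed

lemma gr_mat_left: "hj_mat 2 * gr_mat p q * Mat2 1 0 (-1) 1 = gr_mat (2 * p - q) p"
  by (simp add: gr_mat_def hj_mat_def power2_eq_square algebra_simps)

lemma gr_mat_right: "Mat2 1 1 0 1 * gr_mat p q * hj_mat 2 = gr_mat (p + q) q"
  by (simp add: gr_mat_def hj_mat_def power2_eq_square algebra_simps)

lemma hj_prod_Gr_base: "hj_prod (map uminus [-4]) = gr_mat 2 1"
  by (simp add: hj_prod_def hj_mat_def gr_mat_def)

lemma Gr_nonempty: "ds \<in> Gr \<Longrightarrow> ds \<noteq> []"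
  by (cases rule: Gr.cases) auto

lemma Gr_le_minus_two: "ds \<in> Gr \<Longrightarrow> d \<in> set ds \<Longrightarrow> d \<le> -2"
proof (induction arbitrary: d rule: Gr.induct)
  case (left ds)
  have "last ds \<le> -2"
    using left.IH left.hyps(2) by simp
  from left.prems consider "d = -2" | "d \<in> set (butlast ds)" | "d = last ds - 1"
    by auto
  then show ?case
    using \<open>last ds \<le> -2\<close> left.IH[OF in_set_butlastD] by cases (linarith | blast)+
next
  case (right ds)
  have "hd ds \<le> -2"
    using right.IH right.hyps(2) by simp
  from right.prems consider "d = -2" | "d \<in> set (tl ds)" | "d = hd ds - 1"
    by auto
  then show ?case
    using \<open>hd ds \<le> -2\<close> right.IH[OF list.set_sel(2)[OF right.hyps(2)]]
    by cases (linarith | blast)+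
qed simp

lemma Gr_imp_hj_prod_gr_mat:
  assumes "ds \<in> Gr"
  shows "\<exists>p q. coprime p q \<and> q < p \<and> 0 < q \<and> hj_prod (map uminus ds) = gr_mat p q"
  using assms
proof (induction rule: Gr.induct)
  case base
  show ?case
    using hj_prod_Gr_base by (intro exI[of _ 2] exI[of _ 1]) simp
next
  case (left ds)
  then obtain p q where pq: "coprime p q" "q < p" "0 < q" "hj_prod (map uminus ds) = gr_mat p q"
    by blast
  have "coprime (2 * p - q) p"
    using pq(1) gcd_add_mult[of p 2 "- q"] by (simp add: coprime_iff_gcd_eq_1 gcd.commute)
  moreover have "hj_prod (map uminus ((-2) # butlast ds @ [last ds - 1])) = gr_mat (2 * p - q) p"
    using hj_prod_Gr_left[OF left.hyps(2)] pq(4) gr_mat_left by simp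
  ultimately show ?case
    using pq(2,3) by (intro exI[of _ "2 * p - q"] exI[of _ p]) simp
next
  case (right ds)
  then obtain p q where pq: "coprime p q" "q < p" "0 < q" "hj_prod (map uminus ds) = gr_mat p q"
    by blast
  have "coprime (p + q) q"
    using pq(1) by (simp add: coprime_iff_gcd_eq_1)
  moreover have "hj_prod (map uminus ((hd ds - 1) # tl ds @ [-2])) = gr_mat (p + q) q"
    using hj_prod_Gr_right[OF right.hyps(2)] pq(4) gr_mat_right by simp
  ultimately show ?case
    using pq(2,3) by (intro exI[of _ "p + q"] exI[of _ q]) simp
qed

lemma gr_mat_imp_Gr:
  assumes "coprime p q" "q < p" "0 < q"
  shows "\<exists>ds\<in>Gr. hj_prod (map uminus ds) = gr_mat p q"
  using assms
proof (induction "nat p" arbitrary: p q rule: less_induct)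
  case less
  consider "p = 2 * q" | "2 * q < p" | "p < 2 * q"
    by linarith
  then show ?case
  proof cases
    case 1
    then have "is_unit q"
      using less.prems(1) by (simp add: coprime_commute)
    with 1 less.prems(3) have "p = 2" "q = 1"
      by simp_all
    then show ?thesis
      using Gr.base hj_prod_Gr_base by blast
  next
    case 2
    have "coprime (p - q) q"
      using less.prems(1) by (simp add: coprime_iff_gcd_eq_1 gcd_diff1)
    then obtain ds where ds: "ds \<in> Gr" "hj_prod (map uminus ds) = gr_mat (p - q) q"
      using less.hyps[of "p - q" q] 2 less.prems(3) by auto
    have "hj_prod (map uminus ((hd ds - 1) # tl ds @ [-2])) = gr_mat p q"
      using hj_prod_Gr_right[OF Gr_nonempty[OF ds(1)]] ds(2) gr_mat_right[of "p - q" q] by simp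
    then show ?thesis
      using Gr.right[OF ds(1) Gr_nonempty[OF ds(1)]] by blast
  next
    case 3
    have "coprime q (2 * q - p)"
      using less.prems(1) gcd_add_mult[of q 2 "- p"] by (simp add: coprime_iff_gcd_eq_1 gcd.commute)
    then obtain ds where ds: "ds \<in> Gr" "hj_prod (map uminus ds) = gr_mat q (2 * q - p)"
      using less.hyps[of q "2 * q - p"] 3 less.prems(2,3) by auto
    have "hj_prod (map uminus ((-2) # butlast ds @ [last ds - 1])) = gr_mat p q"
      using hj_prod_Gr_left[OF Gr_nonempty[OF ds(1)]] ds(2) gr_mat_left[of q "2 * q - p"] by simp
    then show ?thesis
      using Gr.left[OF ds(1) Gr_nonempty[OF ds(1)]] by blast
  qed
qed

lemma hj_cf_Cons: "r \<noteq> [] \<Longrightarrow> hj_cf (a # r) = a - 1 / hj_cf r"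
  by (cases r) simp_all

lemma hj_cf_gt_one: "xs \<noteq> [] \<Longrightarrow> \<forall>a\<in>set xs. a \<ge> 2 \<Longrightarrow> 1 < hj_cf xs"
proof (induction xs rule: hj_cf.induct)
  case (3 a b rest)
  then have "1 / hj_cf (b # rest) < 1"
    by simp
  then show ?case
    using "3.prems"(2) by simp
qed auto

lemma hj_cf_Cons_bounds:
  assumes "r \<noteq> []" "\<forall>b\<in>set (a # r). b \<ge> 2"
  shows "of_int a - 1 < hj_cf (a # r)" "hj_cf (a # r) < a"
proof -
  have "0 < 1 / hj_cf r" "1 / hj_cf r < 1"
    using hj_cf_gt_one[of r] assms by simp_all
  then show "of_int a - 1 < hj_cf (a # r)" "hj_cf (a # r) < a"
    using hj_cf_Cons[OF assms(1)] by simp_all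
qed

lemma hj_cf_ceiling:
  assumes "xs \<noteq> []" "\<forall>a\<in>set xs. a \<ge> 2"
  shows "\<lceil>hj_cf xs\<rceil> = hd xs"
proof (cases xs)
  case (Cons a r)
  then show ?thesis
    using hj_cf_Cons_bounds[of r a] assms(2) by (cases "r = []") (auto simp: ceiling_eq_iff)
qed (use assms in simp)

lemma hj_cf_eq_hd_iff:
  assumes "xs \<noteq> []" "\<forall>a\<in>set xs. a \<ge> 2"
  shows "hj_cf xs = hd xs \<longleftrightarrow> tl xs = []"
proof (cases xs)
  case (Cons a r)
  then show ?thesis
    using hj_cf_Cons_bounds[of r a] assms(2) by (cases "r = []") auto
qed (use assms in simp)

lemma hj_cf_inj:
  assumes "xs \<noteq> []" "ys \<noteq> []" "\<forall>a\<in>set xs. a \<ge> 2" "\<forall>a\<in>set ys. a \<ge> 2"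
    and "hj_cf xs = hj_cf ys"
  shows "xs = ys"
  using assms
proof (induction xs arbitrary: ys)
  case (Cons a r)
  have "hd ys = a"
    using hj_cf_ceiling[OF Cons.prems(2,4)] hj_cf_ceiling[OF Cons.prems(1,3)] Cons.prems(5)
    by simp
  then obtain s where ys: "ys = a # s"
    using Cons.prems(2) list.exhaust_sel by blast
  have "r = [] \<longleftrightarrow> s = []"
    using hj_cf_eq_hd_iff[OF Cons.prems(1,3)] hj_cf_eq_hd_iff[OF Cons.prems(2,4)] Cons.prems(5) ys
    by simp
  show ?case
  proof (cases "r = []")
    case False
    with \<open>r = [] \<longleftrightarrow> s = []\<close> have "s \<noteq> []"
      by simp
    have "hj_cf r = hj_cf s"
      using Cons.prems(5) unfolding ys hj_cf_Cons[OF False] hj_cf_Cons[OF \<open>s \<noteq> []\<close>] by simp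
    then have "r = s"
      using Cons.IH[OF False \<open>s \<noteq> []\<close>] Cons.prems(3,4) ys by simp
    then show ?thesis
      using ys by simp
  qed (use ys \<open>r = [] \<longleftrightarrow> s = []\<close> in simp)
qed simp

lemma hj_cf_eq_hj_prod:
  assumes "xs \<noteq> []" "\<forall>a\<in>set xs. a \<ge> 2"
  shows "hj_cf xs = m11 (hj_prod xs) / m21 (hj_prod xs)"
  using assms
proof (induction xs)
  case (Cons a r)
  show ?case
  proof (cases "r = []")
    case True
    then show ?thesis
      by (simp add: hj_prod_def hj_mat_def one_mat2_def)
  next
    case False
    obtain A B C D where P: "hj_prod r = Mat2 A B C D"
      by (cases "hj_prod r")
    have IH: "hj_cf r = A / C"
      using Cons False P by simp
    moreover have "A \<noteq> 0"
      using hj_cf_gt_one[OF False] Cons.prems(2) IH by auto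
    ultimately show ?thesis
      using hj_cf_Cons[OF False] P by (simp add: hj_prod_Cons hj_mat_def field_simps)
  qed
qed simp

lemma hj_cf_gr_mat:
  assumes "xs \<noteq> []" "\<forall>a\<in>set xs. a \<ge> 2" "hj_prod xs = gr_mat p q"
  shows "hj_cf xs = of_int (p\<^sup>2) / of_int (p * q - 1)"
  using hj_cf_eq_hj_prod[OF assms(1,2)] assms(3) by (simp add: gr_mat_def)

theorem proposition4p1:
  fixes as :: "int list"
  assumes "as \<noteq> []"
    and "\<forall>a\<in>set as. a \<ge> 2"
  shows "map uminus as \<in> Gr \<longleftrightarrow>
    (\<exists>p q :: int. coprime p q \<and> p > q \<and> q > 0 \<and>
        hj_cf as = of_int (p^2) / of_int (p * q - 1))"
proof
  assume "map uminus as \<in> Gr"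
  then obtain p q where "coprime p q" "q < p" "0 < q" "hj_prod as = gr_mat p q"
    using Gr_imp_hj_prod_gr_mat[of "map uminus as"] by auto
  then show "\<exists>p q :: int. coprime p q \<and> p > q \<and> q > 0 \<and>
      hj_cf as = of_int (p^2) / of_int (p * q - 1)"
    using hj_cf_gr_mat[OF assms] by blast
next
  assume "\<exists>p q :: int. coprime p q \<and> p > q \<and> q > 0 \<and>
      hj_cf as = of_int (p^2) / of_int (p * q - 1)"
  then obtain p q where pq: "coprime p q" "q < p" "0 < q"
    and cf: "hj_cf as = of_int (p^2) / of_int (p * q - 1)"
    by blast
  obtain ds where ds: "ds \<in> Gr" "hj_prod (map uminus ds) = gr_mat p q"
    using gr_mat_imp_Gr[OF pq] by blast
  have ds_ge: "\<forall>a\<in>set (map uminus ds). a \<ge> 2"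
    using Gr_le_minus_two[OF ds(1)] by force
  have ds_ne: "map uminus ds \<noteq> []"
    using Gr_nonempty[OF ds(1)] by simp
  have "hj_cf (map uminus ds) = hj_cf as"
    using hj_cf_gr_mat[OF ds_ne ds_ge ds(2)] cf by simp
  then have "map uminus ds = as"
    using hj_cf_inj[OF ds_ne assms(1) ds_ge assms(2)] by blast
  then show "map uminus as \<in> Gr"
    using ds(1) by auto
qed

end
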